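(* Let $C\le A$ be groups and $2\le n\le\infty$. If $a\in A\setminus C$ is $n$-RF (respectively $n$-RTF) rel $C$, then so is every element $\tilde a\in CaC$.
   Context: For a group $G$, subgroup $D$, and $2\le n\le\infty$: $a\in G\setminus D$ is $n$-RF rel $D$ if $a^{e_1}d_1\cdots a^{e_k}d_k\ne\mathrm{id}$ for all $k\ge1$, $e_i\in\{\pm1\}$, $d_i\in D$ such that $d_i\ne\mathrm{id}$ whenever $e_i=-e_{i+1}$ (indices mod $k$), and fewer than $n$ of the $e_i$ are $+1$ and fewer than $n$ are $-1$. $a\in G\setminus D$ is $n$-RTF rel $D$ if $ad_1ad_2\cdots ad_k\ne\mathrm{id}$ for all $d_i\in D$ and $1\le k<n$. *)

theory Defs
  imports "HOL-Algebra.Group" "HOL-Library.Extended_Nat"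
begin

text \<open>A word a^{e_1} d_1 ... a^{e_k} d_k is encoded as a list of pairs (e_i, d_i),
  where e_i = True means exponent +1 and e_i = False means exponent -1.\<close>

definition word_eval :: "('a, 'b) monoid_scheme \<Rightarrow> 'a \<Rightarrow> (bool \<times> 'a) list \<Rightarrow> 'a" where
  "word_eval G a ws =
     foldr (\<lambda>(e, d) acc. (if e then a else inv\<^bsub>G\<^esub> a) \<otimes>\<^bsub>G\<^esub> d \<otimes>\<^bsub>G\<^esub> acc) ws \<one>\<^bsub>G\<^esub>"

definition n_RF :: "('a, 'b) monoid_scheme \<Rightarrow> 'a set \<Rightarrow> enat \<Rightarrow> 'a \<Rightarrow> bool" where
  "n_RF G D n a \<longleftrightarrow>
     a \<in> carrier G - D \<and>
     (\<forall>ws. ws \<noteq> [] \<and>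
           (\<forall>p \<in> set ws. snd p \<in> D) \<and>
           (\<forall>i < length ws. fst (ws ! i) \<noteq> fst (ws ! ((i + 1) mod length ws))
                              \<longrightarrow> snd (ws ! i) \<noteq> \<one>\<^bsub>G\<^esub>) \<and>
           enat (length (filter fst ws)) < n \<and>
           enat (length (filter (\<lambda>p. \<not> fst p) ws)) < n
        \<longrightarrow> word_eval G a ws \<noteq> \<one>\<^bsub>G\<^esub>)"

definition n_RTF :: "('a, 'b) monoid_scheme \<Rightarrow> 'a set \<Rightarrow> enat \<Rightarrow> 'a \<Rightarrow> bool" where
  "n_RTF G D n a \<longleftrightarrow>
     a \<in> carrier G - D \<and>
     (\<forall>ds. set ds \<subseteq> D \<and> 1 \<le> length ds \<and> enat (length ds) < n
        \<longrightarrow> foldr (\<lambda>d acc. a \<otimes>\<^bsub>G\<^esub> d \<otimes>\<^bsub>G\<^esub> acc) ds \<one>\<^bsub>G\<^esub> \<noteq> \<one>\<^bsub>G\<^esub>)"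

end

theory Submission
  imports Defs
begin

text \<open>Write \<open>b = c\<^sub>1 a c\<^sub>2\<close>. Then \<open>b\<^sup>e = L\<^sub>e a\<^sup>e R\<^sub>e\<close> for both signs \<open>e\<close>, with
  \<open>L\<^sub>+ = c\<^sub>1\<close>, \<open>R\<^sub>+ = c\<^sub>2\<close>, \<open>L\<^sub>- = c\<^sub>2\<^sup>-\<^sup>1\<close>, \<open>R\<^sub>- = c\<^sub>1\<^sup>-\<^sup>1\<close>, all in \<open>C\<close>. Conjugating a cyclic
  word \<open>b\<^sup>e\<^sup>1 d\<^sub>1 \<dots> b\<^sup>e\<^sup>k d\<^sub>k\<close> by \<open>L\<^sub>e\<^sub>1\<close> and regrouping gives the cyclic word in \<open>a\<close> with the
  same exponents and letters \<open>R\<^sub>e\<^sub>i d\<^sub>i L\<^sub>e\<^sub>i\<^sub>+\<^sub>1 \<in> C\<close>. Where the exponent changes sign,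
  \<open>L\<^sub>e\<^sub>i\<^sub>+\<^sub>1 = R\<^sub>e\<^sub>i\<^sup>-\<^sup>1\<close>, so the new letter is a conjugate of \<open>d\<^sub>i\<close> and is trivial only if
  \<open>d\<^sub>i\<close> is. Hence the side conditions carry over, and the word in \<open>b\<close> is trivial only if
  the one in \<open>a\<close> is. The RTF words are the words with all exponents \<open>+1\<close>.\<close>

definition sign_pow :: "('a, 'b) monoid_scheme \<Rightarrow> 'a \<Rightarrow> bool \<Rightarrow> 'a" where
  "sign_pow G a e = (if e then a else inv\<^bsub>G\<^esub> a)"

definition left_factor :: "('a, 'b) monoid_scheme \<Rightarrow> 'a \<Rightarrow> 'a \<Rightarrow> bool \<Rightarrow> 'a" where
  "left_factor G c1 c2 e = (if e then c1 else inv\<^bsub>G\<^esub> c2)"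

definition right_factor :: "('a, 'b) monoid_scheme \<Rightarrow> 'a \<Rightarrow> 'a \<Rightarrow> bool \<Rightarrow> 'a" where
  "right_factor G c1 c2 e = (if e then c2 else inv\<^bsub>G\<^esub> c1)"

text \<open>\<open>y\<close> is the exponent following the last letter; for a cyclic word it is the first one.\<close>

fun twist_word :: "('a, 'b) monoid_scheme \<Rightarrow> 'a \<Rightarrow> 'a \<Rightarrow> bool \<Rightarrow> (bool \<times> 'a) list \<Rightarrow> (bool \<times> 'a) list" where
  "twist_word G c1 c2 y [] = []"
| "twist_word G c1 c2 y ((e, d) # ws) =
     (e, right_factor G c1 c2 e \<otimes>\<^bsub>G\<^esub> d \<otimes>\<^bsub>G\<^esub> left_factor G c1 c2 (hd (map fst ws @ [y])))
     # twist_word G c1 c2 y ws"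

lemma hd_drop_Suc_append_hd:
  assumes "i < length xs"
  shows "hd (drop (Suc i) xs @ [hd xs]) = xs ! (Suc i mod length xs)"
proof (cases "Suc i < length xs")
  case True
  then show ?thesis by (simp add: hd_append hd_drop_conv_nth)
next
  case False
  with assms have "Suc i = length xs" by simp
  then show ?thesis by (cases xs) simp_all
qed

lemma word_eval_Nil [simp]: "word_eval G a [] = \<one>\<^bsub>G\<^esub>"
  by (simp add: word_eval_def)

lemma word_eval_Cons [simp]:
  "word_eval G a ((e, d) # ws) = sign_pow G a e \<otimes>\<^bsub>G\<^esub> d \<otimes>\<^bsub>G\<^esub> word_eval G a ws"
  by (simp add: word_eval_def sign_pow_def)

lemma foldr_eq_word_eval_Pair_True:
  "foldr (\<lambda>d acc. a \<otimes>\<^bsub>G\<^esub> d \<otimes>\<^bsub>G\<^esub> acc) ds \<one>\<^bsub>G\<^esub> = word_eval G a (map (Pair True) ds)"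
  by (induction ds) (simp_all add: sign_pow_def)

definition rf_word :: "('a, 'b) monoid_scheme \<Rightarrow> 'a set \<Rightarrow> enat \<Rightarrow> (bool \<times> 'a) list \<Rightarrow> bool" where
  "rf_word G D n ws \<longleftrightarrow>
     ws \<noteq> [] \<and>
     (\<forall>p \<in> set ws. snd p \<in> D) \<and>
     (\<forall>i < length ws. fst (ws ! i) \<noteq> fst (ws ! ((i + 1) mod length ws))
                        \<longrightarrow> snd (ws ! i) \<noteq> \<one>\<^bsub>G\<^esub>) \<and>
     enat (length (filter fst ws)) < n \<and>
     enat (length (filter (\<lambda>p. \<not> fst p) ws)) < n"

lemma n_RF_iff_rf_word:
  "n_RF G D n a \<longleftrightarrow> a \<in> carrier G - D \<and> (\<forall>ws. rf_word G D n ws \<longrightarrow> word_eval G a ws \<noteq> \<one>\<^bsub>G\<^esub>)"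
  by (simp add: n_RF_def rf_word_def)

lemma map_fst_twist_word [simp]: "map fst (twist_word G c1 c2 y ws) = map fst ws"
  by (induction G c1 c2 y ws rule: twist_word.induct) simp_all

lemma length_twist_word [simp]: "length (twist_word G c1 c2 y ws) = length ws"
  using map_fst_twist_word by (metis length_map)

lemma twist_word_eq_Nil_iff [simp]: "twist_word G c1 c2 y ws = [] \<longleftrightarrow> ws = []"
  using length_twist_word by (metis length_0_conv)

lemma length_filter_twist_word:
  "length (filter (\<lambda>p. P (fst p)) (twist_word G c1 c2 y ws)) = length (filter (\<lambda>p. P (fst p)) ws)"
  by (induction G c1 c2 y ws rule: twist_word.induct) simp_all

lemma nth_twist_word:
  "i < length ws \<Longrightarrow> twist_word G c1 c2 y ws ! i =
     (fst (ws ! i), right_factor G c1 c2 (fst (ws ! i)) \<otimes>\<^bsub>G\<^esub> snd (ws ! i)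
        \<otimes>\<^bsub>G\<^esub> left_factor G c1 c2 (hd (drop (Suc i) (map fst ws) @ [y])))"
proof (induction G c1 c2 y ws arbitrary: i rule: twist_word.induct)
  case (2 G c1 c2 y e d ws)
  then show ?case by (cases i) simp_all
qed simp

lemma twist_word_Pair_True:
  "twist_word G c1 c2 True (map (Pair True) ds)
     = map (Pair True) (map (\<lambda>d. c2 \<otimes>\<^bsub>G\<^esub> d \<otimes>\<^bsub>G\<^esub> c1) ds)"
  by (induction ds) (auto simp: left_factor_def right_factor_def hd_append hd_map)

lemma nth_twist_word_cyclic:
  assumes "i < length ws"
  shows "twist_word G c1 c2 (fst (hd ws)) ws ! i =
     (fst (ws ! i), right_factor G c1 c2 (fst (ws ! i)) \<otimes>\<^bsub>G\<^esub> snd (ws ! i)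
        \<otimes>\<^bsub>G\<^esub> left_factor G c1 c2 (fst (ws ! (Suc i mod length ws))))"
proof -
  have "hd (map fst ws) = fst (hd ws)"
    using assms by (cases ws) simp_all
  moreover have "Suc i mod length ws < length ws"
    using assms by (cases ws) auto
  ultimately have next_sign:
    "hd (drop (Suc i) (map fst ws) @ [fst (hd ws)]) = fst (ws ! (Suc i mod length ws))"
    using assms hd_drop_Suc_append_hd[of i "map fst ws"] by simp
  show ?thesis
    by (simp only: nth_twist_word[OF assms] next_sign)
qed

context group
begin

lemma sign_pow_closed [simp]: "a \<in> carrier G \<Longrightarrow> sign_pow G a e \<in> carrier G"
  by (simp add: sign_pow_def)

lemma word_eval_closed [simp]:
  "a \<in> carrier G \<Longrightarrow> snd ` set ws \<subseteq> carrier G \<Longrightarrow> word_eval G a ws \<in> carrier G"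
  by (induction ws) auto

lemma conj_eq_one_iff:
  assumes "u \<otimes> g = g \<otimes> v" "u \<in> carrier G" "g \<in> carrier G" "v \<in> carrier G"
  shows "u = \<one> \<longleftrightarrow> v = \<one>"
  using assms by (metis l_one r_one r_cancel_one l_cancel_one')

lemma sign_pow_double_coset:
  assumes "a \<in> carrier G" "c1 \<in> carrier G" "c2 \<in> carrier G"
  shows "sign_pow G (c1 \<otimes> a \<otimes> c2) e
    = left_factor G c1 c2 e \<otimes> sign_pow G a e \<otimes> right_factor G c1 c2 e"
  using assms by (simp add: sign_pow_def left_factor_def right_factor_def inv_mult_group m_assoc)

lemma left_factor_in_subgroup:
  "subgroup H G \<Longrightarrow> c1 \<in> H \<Longrightarrow> c2 \<in> H \<Longrightarrow> left_factor G c1 c2 e \<in> H"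
  by (simp add: left_factor_def subgroup.m_inv_closed)

lemma right_factor_in_subgroup:
  "subgroup H G \<Longrightarrow> c1 \<in> H \<Longrightarrow> c2 \<in> H \<Longrightarrow> right_factor G c1 c2 e \<in> H"
  by (simp add: right_factor_def subgroup.m_inv_closed)

lemma twist_word_in_subgroup:
  assumes "subgroup H G" "c1 \<in> H" "c2 \<in> H" "snd ` set ws \<subseteq> H"
  shows "snd ` set (twist_word G c1 c2 y ws) \<subseteq> H"
  using assms(4)
  by (induction ws)
    (auto simp: assms(1-3) left_factor_in_subgroup right_factor_in_subgroup subgroup.m_closed
      image_subset_iff)

lemma right_factor_left_factor_Not_eq_one_iff:
  assumes "c1 \<in> carrier G" "c2 \<in> carrier G" "d \<in> carrier G"
  shows "right_factor G c1 c2 e \<otimes> d \<otimes> left_factor G c1 c2 (\<not> e) = \<one> \<longleftrightarrow> d = \<one>"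
proof -
  define r where "r = right_factor G c1 c2 e"
  have r: "r \<in> carrier G" using assms by (simp add: r_def right_factor_def)
  have "left_factor G c1 c2 (\<not> e) = inv r"
    using assms by (simp add: r_def left_factor_def right_factor_def)
  moreover have "r \<otimes> d \<otimes> inv r \<otimes> r = r \<otimes> d"
    using r assms by (simp add: m_assoc)
  ultimately show ?thesis
    using conj_eq_one_iff[of "r \<otimes> d \<otimes> inv r" r d] r assms by (simp add: r_def)
qed

lemma word_eval_double_coset_twist_word:
  assumes "a \<in> carrier G" "c1 \<in> carrier G" "c2 \<in> carrier G" "snd ` set ws \<subseteq> carrier G"
  shows "word_eval G (c1 \<otimes> a \<otimes> c2) ws \<otimes> left_factor G c1 c2 y
    = left_factor G c1 c2 (hd (map fst ws @ [y])) \<otimes> word_eval G a (twist_word G c1 c2 y ws)"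
  using assms(4)
proof (induction ws)
  case Nil
  then show ?case using assms by (simp add: left_factor_def)
next
  case (Cons p ws)
  obtain e d where p: "p = (e, d)" by fastforce
  define L where "L = left_factor G c1 c2"
  define R where "R = right_factor G c1 c2"
  define y' where "y' = hd (map fst ws @ [y])"
  have d: "d \<in> carrier G" and ws: "snd ` set ws \<subseteq> carrier G"
    using Cons.prems p by auto
  have carrier: "L e' \<in> carrier G" "R e' \<in> carrier G" "sign_pow G a e' \<in> carrier G" for e'
    using assms subgroup_self left_factor_in_subgroup right_factor_in_subgroup
    by (auto simp: L_def R_def)
  have twist_ws: "snd ` set (twist_word G c1 c2 y ws) \<subseteq> carrier G"
    using twist_word_in_subgroup[OF subgroup_self] assms ws by blast
  have "word_eval G (c1 \<otimes> a \<otimes> c2) (p # ws) \<otimes> L y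
      = L e \<otimes> sign_pow G a e \<otimes> R e \<otimes> d \<otimes> (word_eval G (c1 \<otimes> a \<otimes> c2) ws \<otimes> L y)"
    using assms carrier d ws
    by (simp add: p sign_pow_double_coset L_def R_def) (simp add: m_assoc)
  also have "\<dots> = L e \<otimes> sign_pow G a e \<otimes> R e \<otimes> d \<otimes> (L y' \<otimes> word_eval G a (twist_word G c1 c2 y ws))"
    using Cons.IH ws by (simp add: L_def y'_def)
  also have "\<dots> = L e \<otimes> word_eval G a (twist_word G c1 c2 y (p # ws))"
    using assms carrier d twist_ws by (simp add: p L_def R_def y'_def m_assoc)
  finally show ?case by (simp add: p L_def)
qed

lemma word_eval_double_coset_eq_one_iff:
  assumes "a \<in> carrier G" "c1 \<in> carrier G" "c2 \<in> carrier G" "snd ` set ws \<subseteq> carrier G"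
    and "ws \<noteq> []"
  shows "word_eval G (c1 \<otimes> a \<otimes> c2) ws = \<one>
    \<longleftrightarrow> word_eval G a (twist_word G c1 c2 (fst (hd ws)) ws) = \<one>"
proof -
  have "hd (map fst ws @ [fst (hd ws)]) = fst (hd ws)"
    using assms(5) by (cases ws) simp_all
  moreover have "left_factor G c1 c2 e \<in> carrier G" for e
    using assms by (simp add: left_factor_def)
  moreover have "snd ` set (twist_word G c1 c2 (fst (hd ws)) ws) \<subseteq> carrier G"
    using twist_word_in_subgroup[OF subgroup_self] assms by blast
  ultimately show ?thesis
    using word_eval_double_coset_twist_word[OF assms(1-4), of "fst (hd ws)"] assms
    by (intro conj_eq_one_iff[where g = "left_factor G c1 c2 (fst (hd ws))"]) simp_all
qed

lemma foldr_double_coset_eq_one_iff: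
  assumes "a \<in> carrier G" "c1 \<in> carrier G" "c2 \<in> carrier G" "set ds \<subseteq> carrier G"
  shows "foldr (\<lambda>d acc. (c1 \<otimes> a \<otimes> c2) \<otimes> d \<otimes> acc) ds \<one> = \<one>
    \<longleftrightarrow> foldr (\<lambda>d acc. a \<otimes> d \<otimes> acc) (map (\<lambda>d. c2 \<otimes> d \<otimes> c1) ds) \<one> = \<one>"
proof -
  have "snd ` set (map (Pair True) ds) \<subseteq> carrier G"
    using assms(4) by auto
  from word_eval_double_coset_twist_word[OF assms(1-3) this, of True]
  have "word_eval G (c1 \<otimes> a \<otimes> c2) (map (Pair True) ds) \<otimes> c1
      = c1 \<otimes> word_eval G a (map (Pair True) (map (\<lambda>d. c2 \<otimes> d \<otimes> c1) ds))"
    by (simp add: twist_word_Pair_True left_factor_def hd_append hd_map)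
  then show ?thesis
    unfolding foldr_eq_word_eval_Pair_True
    using assms by (intro conj_eq_one_iff[where g = c1]) (auto intro!: word_eval_closed simp: subset_iff)
qed

lemma double_coset_mem_subgroup_iff:
  assumes "subgroup D G" "c1 \<in> D" "c2 \<in> D" "a \<in> carrier G"
  shows "c1 \<otimes> a \<otimes> c2 \<in> D \<longleftrightarrow> a \<in> D"
proof
  have c: "c1 \<in> carrier G" "c2 \<in> carrier G"
    using assms subgroup.subset by blast+
  assume "c1 \<otimes> a \<otimes> c2 \<in> D"
  then have "inv c1 \<otimes> (c1 \<otimes> a \<otimes> c2) \<otimes> inv c2 \<in> D"
    using assms by (simp add: subgroup.m_closed subgroup.m_inv_closed)
  then show "a \<in> D"
    using assms(4) c by (simp add: m_assoc[symmetric]) (simp add: m_assoc)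
next
  assume "a \<in> D"
  then show "c1 \<otimes> a \<otimes> c2 \<in> D"
    using assms by (simp add: subgroup.m_closed)
qed

lemma rf_word_twist_word:
  assumes D: "subgroup D G" "c1 \<in> D" "c2 \<in> D" and ws: "rf_word G D n ws"
  shows "rf_word G D n (twist_word G c1 c2 (fst (hd ws)) ws)"
proof -
  define ws' where "ws' = twist_word G c1 c2 (fst (hd ws)) ws"
  have c: "c1 \<in> carrier G" "c2 \<in> carrier G"
    using D subgroup.subset by blast+
  have letters: "snd ` set ws \<subseteq> D"
    using ws by (auto simp: rf_word_def)
  have "snd ` set ws' \<subseteq> D"
    unfolding ws'_def using twist_word_in_subgroup[OF D letters] .
  moreover have "snd (ws' ! i) \<noteq> \<one>"
    if i: "i < length ws'" and sign_change: "fst (ws' ! i) \<noteq> fst (ws' ! ((i + 1) mod length ws'))"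
    for i
  proof -
    define j where "j = Suc i mod length ws"
    have "i < length ws"
      using i by (simp add: ws'_def)
    moreover have "j < length ws"
      using \<open>i < length ws\<close> by (cases ws) (simp_all add: j_def)
    ultimately have "fst (ws ! i) \<noteq> fst (ws ! j)"
      using sign_change by (simp add: ws'_def j_def nth_twist_word_cyclic)
    then have next_sign: "fst (ws ! j) = (\<not> fst (ws ! i))" and "snd (ws ! i) \<noteq> \<one>"
      using ws \<open>i < length ws\<close> by (auto simp: rf_word_def j_def)
    moreover have "snd (ws ! i) \<in> carrier G"
      using letters \<open>i < length ws\<close> D(1) subgroup.subset by fastforce
    ultimately show ?thesis
      using \<open>i < length ws\<close> right_factor_left_factor_Not_eq_one_iff[OF c]
      by (simp add: ws'_def nth_twist_word_cyclic next_sign flip: j_def)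
  qed
  ultimately show ?thesis
    using ws
    by (simp add: rf_word_def ws'_def image_subset_iff length_filter_twist_word[of "\<lambda>e. e"]
        length_filter_twist_word[of Not])
qed

lemma n_RF_double_coset:
  assumes D: "subgroup D G" "c1 \<in> D" "c2 \<in> D" and "n_RF G D n a"
  shows "n_RF G D n (c1 \<otimes> a \<otimes> c2)"
proof -
  have a: "a \<in> carrier G - D" and a_RF: "\<And>ws. rf_word G D n ws \<Longrightarrow> word_eval G a ws \<noteq> \<one>"
    using assms(4) by (auto simp: n_RF_iff_rf_word)
  have c: "c1 \<in> carrier G" "c2 \<in> carrier G"
    using D subgroup.subset by blast+
  have "word_eval G (c1 \<otimes> a \<otimes> c2) ws \<noteq> \<one>" if ws: "rf_word G D n ws" for ws
  proof -
    have "snd ` set ws \<subseteq> carrier G" "ws \<noteq> []"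
      using ws D(1) subgroup.subset by (fastforce simp: rf_word_def)+
    then show ?thesis
      using a c a_RF[OF rf_word_twist_word[OF D ws]] word_eval_double_coset_eq_one_iff by blast
  qed
  moreover have "c1 \<otimes> a \<otimes> c2 \<in> carrier G - D"
    using a c double_coset_mem_subgroup_iff[OF D] by simp
  ultimately show ?thesis
    by (simp add: n_RF_iff_rf_word)
qed

lemma n_RTF_double_coset:
  assumes D: "subgroup D G" "c1 \<in> D" "c2 \<in> D" and "n_RTF G D n a"
  shows "n_RTF G D n (c1 \<otimes> a \<otimes> c2)"
proof -
  have a: "a \<in> carrier G - D"
    and a_RTF: "\<And>ds. set ds \<subseteq> D \<Longrightarrow> 1 \<le> length ds \<Longrightarrow> enat (length ds) < n
      \<Longrightarrow> foldr (\<lambda>d acc. a \<otimes> d \<otimes> acc) ds \<one> \<noteq> \<one>"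
    using assms(4) by (auto simp: n_RTF_def)
  have c: "c1 \<in> carrier G" "c2 \<in> carrier G"
    using D subgroup.subset by blast+
  have "foldr (\<lambda>d acc. (c1 \<otimes> a \<otimes> c2) \<otimes> d \<otimes> acc) ds \<one> \<noteq> \<one>"
    if ds: "set ds \<subseteq> D" "1 \<le> length ds" "enat (length ds) < n" for ds
  proof -
    have "set (map (\<lambda>d. c2 \<otimes> d \<otimes> c1) ds) \<subseteq> D"
      using ds(1) D by (auto simp: subgroup.m_closed)
    moreover have "set ds \<subseteq> carrier G"
      using ds(1) D(1) subgroup.subset by blast
    ultimately show ?thesis
      using a c ds a_RTF[of "map (\<lambda>d. c2 \<otimes> d \<otimes> c1) ds"] foldr_double_coset_eq_one_iff by auto
  qed
  moreover have "c1 \<otimes> a \<otimes> c2 \<in> carrier G - D"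
    using a c double_coset_mem_subgroup_iff[OF D] by simp
  ultimately show ?thesis
    by (simp add: n_RTF_def)
qed

end

theorem lemma5p23:
  fixes A (structure) and C :: "'a set" and n :: enat and a c1 c2 :: 'a
  assumes "group A" and "subgroup C A" and "2 \<le> n"
    and "c1 \<in> C" and "c2 \<in> C"
  shows "(n_RF A C n a \<longrightarrow> n_RF A C n (c1 \<otimes> a \<otimes> c2))
       \<and> (n_RTF A C n a \<longrightarrow> n_RTF A C n (c1 \<otimes> a \<otimes> c2))"
  using group.n_RF_double_coset[OF assms(1,2,4,5)] group.n_RTF_double_coset[OF assms(1,2,4,5)]
  by blast

end
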